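(* Let $N\ge3$, let $G_{2N}=K_2\otimes K_N$, and let $k=N-1$ be the common degree of its vertices. For vertices $i,j$ let $d_{ij}$ be their distance, and let $M^m_{ij}$ be the number of walks of length $m$ from $i$ to $j$ in $G_{2N}$. Then: - if $i\neq j$, $d_{ij}=1$ and $m$ is odd, then $M^m_{ij}=\frac{k^{m}+1}{k+1}$; - if $i\neq j$, $d_{ij}=2$ and $m\ge 2$ is even, then $M^m_{ij}=\frac{k^{m}-1}{k+1}$; - if $i=j$ and $m$ is odd, then $M^m_{ii}=0$; - if $i=j$ and $m\ge2$ is even, then $M^m_{ii}=\frac{k^{m}-1}{k+1}+1$.
   Context: $K_2\otimes K_N$ is the Kronecker (tensor) product of $K_2$ and $K_N$. Its vertex set is $\{1,2\}\times\{1,\dots,N\}$, with $(a,u)\sim(b,v)$ if and only if $a\neq b$ and $u\neq v$. *)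

theory Defs
  imports Complex_Main
begin

definition tensor_vertices :: "nat \<Rightarrow> (nat \<times> nat) set" where
  "tensor_vertices N = {1,2} \<times> {1..N}"

definition tensor_adj :: "nat \<Rightarrow> nat \<times> nat \<Rightarrow> nat \<times> nat \<Rightarrow> bool" where
  "tensor_adj N x y \<longleftrightarrow> x \<in> tensor_vertices N \<and> y \<in> tensor_vertices N
      \<and> fst x \<noteq> fst y \<and> snd x \<noteq> snd y"

definition walks :: "nat \<Rightarrow> nat \<Rightarrow> nat \<times> nat \<Rightarrow> nat \<times> nat \<Rightarrow> (nat \<times> nat) list set" where
  "walks N m i j = {p. length p = Suc m \<and> set p \<subseteq> tensor_vertices N
      \<and> hd p = i \<and> last p = j \<and> (\<forall>t<m. tensor_adj N (p ! t) (p ! Suc t))}"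

definition num_walks :: "nat \<Rightarrow> nat \<Rightarrow> nat \<times> nat \<Rightarrow> nat \<times> nat \<Rightarrow> nat" where
  "num_walks N m i j = card (walks N m i j)"

definition graph_dist :: "nat \<Rightarrow> nat \<times> nat \<Rightarrow> nat \<times> nat \<Rightarrow> nat" where
  "graph_dist N i j = (LEAST m. walks N m i j \<noteq> {})"

end

theory Submission
  imports Defs
begin

text \<open>Counting walks by their last step, the number of walks of length m+1 from i to j is the
  sum of the numbers of walks of length m from i to the neighbours of j. This recursion is solved
  in closed form by induction on m: N times the count vanishes unless the parity of m matches
  whether i and j lie in the same copy of K_N, and otherwise it is k^m + k(-1)^m or k^m - (-1)^m
  according as i and j do or do not share their K_N-coordinate. The closed form is positive for
  m = 2 or 3 of the right parity, so the graph is connected and a walk of length d_ij exists;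
  a walk of length 1 makes i and j adjacent and, the graph being bipartite, a walk of length 2
  puts them in the same copy of K_N.\<close>

lemma finite_walks: "finite (walks N m i j)"
proof (rule finite_subset)
  show "walks N m i j \<subseteq> {p. set p \<subseteq> tensor_vertices N \<and> length p = Suc m}"
    unfolding walks_def by auto
  show "finite {p. set p \<subseteq> tensor_vertices N \<and> length p = Suc m}"
    by (rule finite_lists_length_eq) (simp add: tensor_vertices_def)
qed

lemma walks_0: "walks N 0 i j = (if i = j \<and> i \<in> tensor_vertices N then {[i]} else {})"
  unfolding walks_def by (auto simp: length_Suc_conv)

lemma snoc_in_walks_iff:
  "p @ [j] \<in> walks N (Suc m) i j \<longleftrightarrow> (\<exists>x. p \<in> walks N m i x \<and> tensor_adj N x j)"
proof
  assume "p @ [j] \<in> walks N (Suc m) i j"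
  then have len: "length p = Suc m" and vs: "set p \<subseteq> tensor_vertices N" and "hd p = i"
    and steps: "\<forall>t<Suc m. tensor_adj N ((p @ [j]) ! t) ((p @ [j]) ! Suc t)"
    unfolding walks_def by (auto simp: hd_append)
  then have "p \<noteq> []" by auto
  have "\<forall>t<m. tensor_adj N (p ! t) (p ! Suc t)"
  proof (intro allI impI)
    fix t assume "t < m"
    then show "tensor_adj N (p ! t) (p ! Suc t)"
      using steps[rule_format, of t] len by (simp add: nth_append)
  qed
  moreover have "tensor_adj N (last p) j"
    using steps[rule_format, of m] len \<open>p \<noteq> []\<close> by (simp add: nth_append last_conv_nth)
  ultimately show "\<exists>x. p \<in> walks N m i x \<and> tensor_adj N x j"
    using len vs \<open>hd p = i\<close> unfolding walks_def by blast
next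
  assume "\<exists>x. p \<in> walks N m i x \<and> tensor_adj N x j"
  then obtain x where p: "p \<in> walks N m i x" and adj: "tensor_adj N x j" by blast
  then have len: "length p = Suc m" and "p \<noteq> []" and "last p = x" and "hd p = i"
    and steps: "\<forall>t<m. tensor_adj N (p ! t) (p ! Suc t)"
    unfolding walks_def by auto
  have "\<forall>t<Suc m. tensor_adj N ((p @ [j]) ! t) ((p @ [j]) ! Suc t)"
    using steps adj len \<open>last p = x\<close> \<open>p \<noteq> []\<close>
    by (auto simp: nth_append less_Suc_eq last_conv_nth)
  with p adj len \<open>hd p = i\<close> \<open>p \<noteq> []\<close> show "p @ [j] \<in> walks N (Suc m) i j"
    unfolding walks_def tensor_adj_def by auto
qed

lemma walks_Suc:
  "walks N (Suc m) i j = (\<Union>x\<in>{x. tensor_adj N x j}. (\<lambda>p. p @ [j]) ` walks N m i x)"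
proof (intro equalityI subsetI)
  fix q assume q: "q \<in> walks N (Suc m) i j"
  then have "q \<noteq> []" and "last q = j"
    unfolding walks_def by auto
  then have "q = butlast q @ [j]"
    by (metis append_butlast_last_id)
  moreover obtain x where "butlast q \<in> walks N m i x" and "tensor_adj N x j"
    using q calculation snoc_in_walks_iff by metis
  ultimately show "q \<in> (\<Union>x\<in>{x. tensor_adj N x j}. (\<lambda>p. p @ [j]) ` walks N m i x)"
    by blast
qed (blast intro: snoc_in_walks_iff[THEN iffD2])

lemma num_walks_Suc:
  "num_walks N (Suc m) i j = (\<Sum>x\<in>{x. tensor_adj N x j}. num_walks N m i x)"
proof -
  have fin: "finite {x. tensor_adj N x j}"
    by (rule finite_subset[of _ "tensor_vertices N"]) (auto simp: tensor_adj_def tensor_vertices_def)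
  have "num_walks N (Suc m) i j = (\<Sum>x\<in>{x. tensor_adj N x j}. card ((\<lambda>p. p @ [j]) ` walks N m i x))"
    unfolding num_walks_def walks_Suc
  proof (rule card_UN_disjoint[OF fin])
    show "\<forall>x\<in>{x. tensor_adj N x j}. finite ((\<lambda>p. p @ [j]) ` walks N m i x)"
      by (simp add: finite_walks)
  qed (auto simp: walks_def)
  also have "\<dots> = (\<Sum>x\<in>{x. tensor_adj N x j}. num_walks N m i x)"
    unfolding num_walks_def by (intro sum.cong refl card_image) (auto intro: inj_onI)
  finally show ?thesis .
qed

lemma tensor_adj_neighbours:
  assumes "j \<in> tensor_vertices N"
  shows "{x. tensor_adj N x j} = (\<lambda>w. (3 - fst j, w)) ` ({1..N} - {snd j})"
proof (intro equalityI subsetI)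
  fix x assume "x \<in> {x. tensor_adj N x j}"
  with assms have "x = (3 - fst j, snd x)" and "snd x \<in> {1..N} - {snd j}"
    unfolding tensor_adj_def tensor_vertices_def by (auto simp: prod_eq_iff)
  then show "x \<in> (\<lambda>w. (3 - fst j, w)) ` ({1..N} - {snd j})"
    by (metis imageI)
qed (use assms in \<open>auto simp: tensor_adj_def tensor_vertices_def\<close>)

lemma walks_nonempty_imp_parity:
  assumes "walks N m i j \<noteq> {}"
  shows "fst j = fst i \<longleftrightarrow> even m"
  using assms
proof (induction m arbitrary: j)
  case 0
  then show ?case by (simp add: walks_0 split: if_splits)
next
  case (Suc m)
  then obtain x where walk: "walks N m i x \<noteq> {}" and "tensor_adj N x j"
    unfolding walks_Suc by blast
  moreover from walk obtain p where "p \<in> walks N m i x" by blast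
  then have "i \<in> tensor_vertices N"
    unfolding walks_def by (cases p) auto
  ultimately show ?case
    using Suc.IH[OF walk] unfolding tensor_adj_def tensor_vertices_def by auto
qed

lemma walks_1_nonempty_iff: "walks N 1 i j \<noteq> {} \<longleftrightarrow> tensor_adj N i j"
proof
  assume "walks N 1 i j \<noteq> {}"
  then obtain x where "walks N 0 i x \<noteq> {}" "tensor_adj N x j"
    unfolding One_nat_def walks_Suc by blast
  then show "tensor_adj N i j"
    by (simp add: walks_0 split: if_splits)
next
  assume adj: "tensor_adj N i j"
  then have "[i] \<in> walks N 0 i i"
    by (simp add: walks_0 tensor_adj_def)
  with adj have "[i] @ [j] \<in> walks N 1 i j"
    unfolding One_nat_def snoc_in_walks_iff by blast
  then show "walks N 1 i j \<noteq> {}" by blast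
qed

lemma sum_if_eq:
  fixes A B :: "'b :: comm_ring_1"
  assumes "finite S"
  shows "(\<Sum>w\<in>S. if u = w then A else B) = (if u \<in> S then A - B else 0) + of_nat (card S) * B"
proof -
  have "(\<Sum>w\<in>S. if u = w then A else B) = (\<Sum>w\<in>S. (if u = w then A - B else 0) + B)"
    by (intro sum.cong) auto
  then show ?thesis
    using assms by (simp add: sum.distrib)
qed

text \<open>The adjacency matrix of K_2 tensor K_N has the simple eigenvalues k and -k and the
  eigenvalues 1 and -1 of multiplicity N - 1; the spectral decomposition of its m-th power yields
  N times the number of walks, which is integral and given by the formula below.\<close>

definition scaled_num_walks :: "nat \<Rightarrow> nat \<Rightarrow> nat \<times> nat \<Rightarrow> nat \<times> nat \<Rightarrow> int" where
  "scaled_num_walks N m i j =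
     (if (fst j = fst i) = even m then
        (if snd j = snd i then (int N - 1) ^ m + (int N - 1) * (-1) ^ m
         else (int N - 1) ^ m - (-1) ^ m)
      else 0)"

lemma num_walks_closed_form:
  assumes "i \<in> tensor_vertices N" and "j \<in> tensor_vertices N"
  shows "int N * int (num_walks N m i j) = scaled_num_walks N m i j"
  using assms(2)
proof (induction m arbitrary: j)
  case 0
  show ?case
  proof (cases "i = j")
    case True
    with assms(1) show ?thesis
      by (simp add: num_walks_def walks_0 scaled_num_walks_def)
  next
    case False
    then show ?thesis
      by (auto simp: num_walks_def walks_0 scaled_num_walks_def prod_eq_iff)
  qed
next
  case (Suc m)
  define S where "S = {1..N} - {snd j}"
  define k :: int where "k = int N - 1"
  define s :: int where "s = (-1) ^ m"
  have vertices: "fst i \<in> {1, 2}" "fst j \<in> {1, 2}" "snd i \<in> {1..N}" "snd j \<in> {1..N}"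
    using assms(1) Suc.prems unfolding tensor_vertices_def by auto
  have "finite S" by (simp add: S_def)
  have card_S: "of_nat (card S) = k"
    using vertices unfolding S_def k_def by (simp add: of_nat_diff)
  have "int N * int (num_walks N (Suc m) i j)
      = (\<Sum>x\<in>{x. tensor_adj N x j}. int N * int (num_walks N m i x))"
    by (simp add: num_walks_Suc sum_distrib_left)
  also have "\<dots> = (\<Sum>w\<in>S. int N * int (num_walks N m i (3 - fst j, w)))"
    unfolding tensor_adj_neighbours[OF Suc.prems] S_def
    by (subst sum.reindex) (auto intro: inj_onI)
  also have "\<dots> = (\<Sum>w\<in>S. scaled_num_walks N m i (3 - fst j, w))"
    using vertices by (intro sum.cong refl Suc.IH) (auto simp: S_def tensor_vertices_def)
  finally have step: "int N * int (num_walks N (Suc m) i j)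
      = (\<Sum>w\<in>S. scaled_num_walks N m i (3 - fst j, w))" .
  show ?case
  proof (cases "(fst j = fst i) = even (Suc m)")
    case False
    with vertices show ?thesis
      unfolding step by (auto simp: scaled_num_walks_def)
  next
    case True
    with vertices have "scaled_num_walks N m i (3 - fst j, w)
        = (if snd i = w then k ^ m + k * s else k ^ m - s)" for w
      unfolding scaled_num_walks_def k_def s_def by auto
    then have "int N * int (num_walks N (Suc m) i j)
        = (\<Sum>w\<in>S. if snd i = w then k ^ m + k * s else k ^ m - s)"
      unfolding step by simp
    also have "\<dots> = (if snd i \<in> S then k * s + s else 0) + k * (k ^ m - s)"
      unfolding sum_if_eq[OF \<open>finite S\<close>] card_S by (simp add: algebra_simps)
    finally have count: "int N * int (num_walks N (Suc m) i j)
        = (if snd i \<in> S then k * s + s else 0) + k * (k ^ m - s)" .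
    have "snd i \<in> S \<longleftrightarrow> snd j \<noteq> snd i"
      using vertices by (auto simp: S_def)
    moreover have "(-1 :: int) ^ Suc m = - s" by (simp add: s_def)
    ultimately show ?thesis
      using True count unfolding scaled_num_walks_def k_def[symmetric]
      by (simp add: algebra_simps split: if_splits)
  qed
qed

lemma real_num_walks_eq:
  assumes "i \<in> tensor_vertices N" and "j \<in> tensor_vertices N"
  shows "real (num_walks N m i j) = of_int (scaled_num_walks N m i j) / real N"
proof -
  have "real N * real (num_walks N m i j) = of_int (scaled_num_walks N m i j)"
    using arg_cong[OF num_walks_closed_form[OF assms], of real_of_int] by simp
  moreover have "N > 0" using assms(1) by (auto simp: tensor_vertices_def)
  ultimately show ?thesis
    by (simp add: field_simps)
qed

lemma scaled_num_walks_pos: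
  assumes "N \<ge> 3" and "m \<ge> 2" and "(fst j = fst i) = even m"
  shows "scaled_num_walks N m i j > 0"
proof -
  define k :: int where "k = int N - 1"
  have "k \<ge> 2" using assms(1) by (simp add: k_def)
  then have "k * k \<le> k ^ m"
    using power_increasing[OF assms(2), of k] by (simp add: power2_eq_square)
  moreover have "2 * k \<le> k * k" using \<open>k \<ge> 2\<close> by (simp add: mult_right_mono)
  ultimately have "2 * k \<le> k ^ m" by linarith
  with assms(3) \<open>k \<ge> 2\<close> show ?thesis
    unfolding scaled_num_walks_def k_def[symmetric] by (auto simp: minus_one_power_iff)
qed

lemma tensor_connected:
  assumes "N \<ge> 3" and "i \<in> tensor_vertices N" and "j \<in> tensor_vertices N"
  shows "walks N (if fst j = fst i then 2 else 3) i j \<noteq> {}"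
proof -
  let ?m = "if fst j = fst i then 2 else 3 :: nat"
  have "int N * int (num_walks N ?m i j) > 0"
    unfolding num_walks_closed_form[OF assms(2,3)] using assms(1)
    by (intro scaled_num_walks_pos) auto
  then show ?thesis
    unfolding num_walks_def by (auto simp: card_eq_0_iff)
qed

lemma walks_graph_dist_nonempty:
  assumes "N \<ge> 3" and "i \<in> tensor_vertices N" and "j \<in> tensor_vertices N"
  shows "walks N (graph_dist N i j) i j \<noteq> {}"
  unfolding graph_dist_def using tensor_connected[OF assms] by (rule LeastI)

lemma graph_dist_eq_1_imp_adjacent:
  assumes "N \<ge> 3" and "i \<in> tensor_vertices N" and "j \<in> tensor_vertices N"
    and "graph_dist N i j = 1"
  shows "fst j \<noteq> fst i \<and> snd j \<noteq> snd i"
  using walks_graph_dist_nonempty[OF assms(1-3)] assms(4) walks_1_nonempty_iff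
  unfolding tensor_adj_def by auto

lemma graph_dist_eq_2_imp_same_side:
  assumes "N \<ge> 3" and "i \<in> tensor_vertices N" and "j \<in> tensor_vertices N"
    and "graph_dist N i j = 2"
  shows "fst j = fst i"
  using walks_nonempty_imp_parity[OF walks_graph_dist_nonempty[OF assms(1-3)]] assms(4) by simp

theorem lemma7:
  fixes N m :: nat and i j :: "nat \<times> nat" and k :: real
  assumes "N \<ge> 3"
    and "k = real N - 1"
    and "i \<in> tensor_vertices N" and "j \<in> tensor_vertices N"
  shows "(i \<noteq> j \<and> graph_dist N i j = 1 \<and> odd m \<longrightarrow>
            real (num_walks N m i j) = (k ^ m + 1) / (k + 1))
       \<and> (i \<noteq> j \<and> graph_dist N i j = 2 \<and> even m \<and> m \<ge> 2 \<longrightarrow>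
            real (num_walks N m i j) = (k ^ m - 1) / (k + 1))
       \<and> (i = j \<and> odd m \<longrightarrow> num_walks N m i i = 0)
       \<and> (i = j \<and> even m \<and> m \<ge> 2 \<longrightarrow>
            real (num_walks N m i i) = (k ^ m - 1) / (k + 1) + 1)"
proof -
  have count: "real (num_walks N m i j) = of_int (scaled_num_walks N m i j) / (k + 1)"
    using real_num_walks_eq[OF assms(3,4)] assms(2) by simp
  have k: "real N - 1 = k" and "k + 1 > 0" using assms(1,2) by simp_all
  show ?thesis
  proof (intro conjI impI)
    assume "i \<noteq> j \<and> graph_dist N i j = 1 \<and> odd m"
    then show "real (num_walks N m i j) = (k ^ m + 1) / (k + 1)"
      using count graph_dist_eq_1_imp_adjacent[OF assms(1,3,4)] by (simp add: scaled_num_walks_def k)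
  next
    assume dist_2: "i \<noteq> j \<and> graph_dist N i j = 2 \<and> even m \<and> m \<ge> 2"
    then have "fst j = fst i"
      using graph_dist_eq_2_imp_same_side[OF assms(1,3,4)] by simp
    with dist_2 show "real (num_walks N m i j) = (k ^ m - 1) / (k + 1)"
      using count by (simp add: scaled_num_walks_def k prod_eq_iff)
  next
    assume "i = j \<and> odd m"
    then show "num_walks N m i i = 0"
      using num_walks_closed_form[OF assms(3,3), of m] assms(1) by (simp add: scaled_num_walks_def)
  next
    assume "i = j \<and> even m \<and> m \<ge> 2"
    then have "real (num_walks N m i i) = (k ^ m + k) / (k + 1)"
      using count by (simp add: scaled_num_walks_def k)
    with \<open>k + 1 > 0\<close> show "real (num_walks N m i i) = (k ^ m - 1) / (k + 1) + 1"
      by (simp add: field_simps)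
  qed
qed

end
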